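(* Let $M_{1/2} := \mathbb{N}_0[\frac12]$. A nonzero element $P(x) \in \mathbb{Q}[M_{1/2}]$ is irreducible in $\mathbb{Q}[M_{1/2}]$ if and only if $P(x^{2^n})$ is irreducible in $\mathbb{Q}[x]$ for every $n \in \mathbb{N}$ such that $P(x^{2^n}) \in \mathbb{Q}[x]$.
   Context: $\mathbb{Q}[M_{1/2}]$ is the domain of polynomial expressions $\sum c_i x^{m_i}$ with $c_i \in \mathbb{Q}$ and $m_i$ nonnegative dyadic rationals; $P(x^{2^n})$ denotes the expression obtained by replacing each $x^{m}$ by $x^{2^n m}$. *)

theory Defs
  imports "HOL-Library.Poly_Mapping" "HOL-Computational_Algebra.Polynomial"
    "HOL-Computational_Algebra.Factorial_Ring"
begin

typedef dyadic = "{q :: rat. 0 \<le> q \<and> (\<exists>n::nat. q * 2 ^ n \<in> \<int>)}"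
  morphisms rat_of_dyadic Abs_dyadic
  by (rule exI[of _ 0]) auto

setup_lifting type_definition_dyadic

instantiation dyadic :: comm_monoid_add
begin
lift_definition zero_dyadic :: dyadic is 0 by auto
lift_definition plus_dyadic :: "dyadic \<Rightarrow> dyadic \<Rightarrow> dyadic" is "(+)"
proof -
  fix a b :: rat
  assume a: "0 \<le> a \<and> (\<exists>n::nat. a * 2 ^ n \<in> \<int>)" and b: "0 \<le> b \<and> (\<exists>n::nat. b * 2 ^ n \<in> \<int>)"
  then obtain m n :: nat where m: "a * 2 ^ m \<in> \<int>" and n: "b * 2 ^ n \<in> \<int>" by blast
  have "a * 2 ^ (m + n) = (a * 2 ^ m) * 2 ^ n" by (simp add: power_add)
  also have "\<dots> \<in> \<int>" using m by simp
  finally have 1: "a * 2 ^ (m + n) \<in> \<int>" .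
  have "b * 2 ^ (m + n) = (b * 2 ^ n) * 2 ^ m" by (simp add: power_add)
  also have "\<dots> \<in> \<int>" using n by simp
  finally have 2: "b * 2 ^ (m + n) \<in> \<int>" .
  have "(a + b) * 2 ^ (m + n) \<in> \<int>" using 1 2 by (simp add: distrib_right)
  then show "0 \<le> a + b \<and> (\<exists>n::nat. (a + b) * 2 ^ n \<in> \<int>)" using a b by auto
qed
instance by standard (transfer, simp)+
end

text \<open>The monoid algebra Q[M_{1/2}]: finitely supported functions M_{1/2} \<Rightarrow> Q with
  convolution product; the monomial x^m is Poly_Mapping.single m 1.\<close>

type_synonym QM = "dyadic \<Rightarrow>\<^sub>0 rat"

text \<open>P(x^{2^n}) lies in Q[x]: every exponent m in the support satisfies 2^n m \<in> N_0.\<close>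
definition in_Qx_after :: "nat \<Rightarrow> QM \<Rightarrow> bool" where
  "in_Qx_after n P \<longleftrightarrow> (\<forall>m \<in> Poly_Mapping.keys P. rat_of_dyadic m * 2 ^ n \<in> \<int>)"

text \<open>The polynomial P(x^{2^n}) \<in> Q[x] (meaningful when in_Qx_after n P holds):
  each x^m is replaced by x^{2^n m}.\<close>
definition subst_pow2 :: "nat \<Rightarrow> QM \<Rightarrow> rat poly" where
  "subst_pow2 n P = (\<Sum>m \<in> Poly_Mapping.keys P. monom (Poly_Mapping.lookup P m) (nat \<lfloor>rat_of_dyadic m * 2 ^ n\<rfloor>))"

end

theory Submission
  imports Defs
begin

text \<open>For each n, the elements of Q[M_{1/2}] whose exponents all lie in 2^(-n) N_0 form a
  subring, and P \<mapsto> P(x^(2^n)) is a ring isomorphism from it onto Q[x]. These subrings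
  increase with n and exhaust Q[M_{1/2}], and on both sides the units are the nonzero
  constants. Hence any factorisation P = A B already takes place in one of the subrings and is
  transported to Q[x], while any factorisation of P(x^(2^n)) in Q[x] lifts back.\<close>

definition pow2_exponent :: "nat \<Rightarrow> dyadic \<Rightarrow> nat" where
  "pow2_exponent n m = nat \<lfloor>rat_of_dyadic m * 2 ^ n\<rfloor>"

lemma of_nat_pow2_exponent:
  assumes "rat_of_dyadic m * 2 ^ n \<in> \<int>"
  shows "of_nat (pow2_exponent n m) = rat_of_dyadic m * 2 ^ n"
proof -
  obtain i where i: "rat_of_dyadic m * 2 ^ n = of_int i"
    using assms by (auto elim: Ints_cases)
  have "0 \<le> rat_of_dyadic m * 2 ^ n"
    using rat_of_dyadic[of m] by simp
  then have "0 \<le> i"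
    using i by simp
  then show ?thesis
    using i by (simp add: pow2_exponent_def)
qed

lemma pow2_exponent_add:
  assumes "rat_of_dyadic a * 2 ^ n \<in> \<int>" "rat_of_dyadic b * 2 ^ n \<in> \<int>"
  shows "pow2_exponent n (a + b) = pow2_exponent n a + pow2_exponent n b"
proof -
  have "rat_of_dyadic (a + b) * 2 ^ n = rat_of_dyadic a * 2 ^ n + rat_of_dyadic b * 2 ^ n"
    by (simp add: plus_dyadic.rep_eq distrib_right)
  then have "of_nat (pow2_exponent n (a + b)) = (of_nat (pow2_exponent n a + pow2_exponent n b) :: rat)"
    using assms by (simp add: of_nat_pow2_exponent)
  then show ?thesis
    by (rule of_nat_eq_iff[THEN iffD1])
qed

lemma pow2_exponent_inj:
  assumes "rat_of_dyadic a * 2 ^ n \<in> \<int>" "rat_of_dyadic b * 2 ^ n \<in> \<int>"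
    and "pow2_exponent n a = pow2_exponent n b"
  shows "a = b"
proof -
  have "rat_of_dyadic a * 2 ^ n = rat_of_dyadic b * 2 ^ n"
    using assms by (metis of_nat_pow2_exponent)
  then show ?thesis
    by (simp add: rat_of_dyadic_inject)
qed

lemma pow2_exponent_zero [simp]: "pow2_exponent n 0 = 0"
  by (simp add: pow2_exponent_def zero_dyadic.rep_eq)

definition dyadic_of :: "nat \<Rightarrow> nat \<Rightarrow> dyadic" where
  "dyadic_of n k = Abs_dyadic (of_nat k / 2 ^ n)"

lemma rat_of_dyadic_of: "rat_of_dyadic (dyadic_of n k) = of_nat k / 2 ^ n"
  unfolding dyadic_of_def by (rule Abs_dyadic_inverse) (auto intro!: exI[of _ n])

lemma pow2_exponent_dyadic_of: "pow2_exponent n (dyadic_of n k) = k"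
  by (simp add: pow2_exponent_def rat_of_dyadic_of)

lemma in_Qx_after_single_0: "in_Qx_after n (Poly_Mapping.single 0 c)"
  by (simp add: in_Qx_after_def zero_dyadic.rep_eq)

lemma in_Qx_after_diff:
  assumes "in_Qx_after n P" "in_Qx_after n Q"
  shows "in_Qx_after n (P - Q)"
  using assms unfolding in_Qx_after_def by (auto dest: subsetD[OF keys_diff])

lemma in_Qx_after_mult:
  assumes "in_Qx_after n P" "in_Qx_after n Q"
  shows "in_Qx_after n (P * Q)"
  unfolding in_Qx_after_def
proof
  fix m
  assume "m \<in> Poly_Mapping.keys (P * Q)"
  then obtain a b where "m = a + b" "a \<in> Poly_Mapping.keys P" "b \<in> Poly_Mapping.keys Q"
    using keys_mult by blast
  then show "rat_of_dyadic m * 2 ^ n \<in> \<int>"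
    using assms by (auto simp: in_Qx_after_def plus_dyadic.rep_eq distrib_right)
qed

lemma dyadic_scaled_in_Ints_mono:
  assumes "rat_of_dyadic m * 2 ^ n \<in> \<int>" "n \<le> k"
  shows "rat_of_dyadic m * 2 ^ k \<in> \<int>"
proof -
  have "rat_of_dyadic m * 2 ^ k = (rat_of_dyadic m * 2 ^ n) * 2 ^ (k - n)"
    using assms(2) by (simp flip: power_add)
  then show ?thesis
    using assms(1) by (metis Ints_mult Ints_power Ints_numeral)
qed

lemma in_Qx_after_mono: "in_Qx_after n P \<Longrightarrow> n \<le> k \<Longrightarrow> in_Qx_after k P"
  unfolding in_Qx_after_def using dyadic_scaled_in_Ints_mono by blast

lemma ex_in_Qx_after: "\<exists>n. in_Qx_after n P"
proof -
  have "\<forall>m\<in>Poly_Mapping.keys P. \<exists>k. rat_of_dyadic m * 2 ^ k \<in> \<int>"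
    using rat_of_dyadic by auto
  then obtain k where k: "\<And>m. m \<in> Poly_Mapping.keys P \<Longrightarrow> rat_of_dyadic m * 2 ^ k m \<in> \<int>"
    by metis
  have "in_Qx_after (Max (k ` Poly_Mapping.keys P)) P"
    unfolding in_Qx_after_def
    by (meson k dyadic_scaled_in_Ints_mono Max_ge finite_keys finite_imageI imageI)
  then show ?thesis ..
qed

lemma in_Qx_after_common:
  obtains n where "in_Qx_after n P" "in_Qx_after n Q"
proof -
  obtain a b where "in_Qx_after a P" "in_Qx_after b Q"
    using ex_in_Qx_after by blast
  then show thesis
    using that in_Qx_after_mono[of a P "max a b"] in_Qx_after_mono[of b Q "max a b"] by simp
qed

lemma subst_pow2_superset:
  assumes "finite S" "Poly_Mapping.keys P \<subseteq> S"
  shows "subst_pow2 n P = (\<Sum>m\<in>S. monom (Poly_Mapping.lookup P m) (pow2_exponent n m))"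
  unfolding subst_pow2_def pow2_exponent_def
  by (rule sum.mono_neutral_left) (use assms in \<open>auto simp: in_keys_iff\<close>)

lemma subst_pow2_zero [simp]: "subst_pow2 n 0 = 0"
  by (simp add: subst_pow2_def)

lemma subst_pow2_single [simp]:
  "subst_pow2 n (Poly_Mapping.single m c) = monom c (pow2_exponent n m)"
  by (simp add: subst_pow2_def pow2_exponent_def)

lemma subst_pow2_add: "subst_pow2 n (P + Q) = subst_pow2 n P + subst_pow2 n Q"
proof -
  let ?S = "Poly_Mapping.keys P \<union> Poly_Mapping.keys Q"
  let ?subst = "\<lambda>R. \<Sum>m\<in>?S. monom (Poly_Mapping.lookup R m) (pow2_exponent n m)"
  have "subst_pow2 n (P + Q) = ?subst (P + Q)"
    by (intro subst_pow2_superset) (auto dest: subsetD[OF keys_add])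
  also have "\<dots> = ?subst P + ?subst Q"
    by (simp add: lookup_add add_monom[symmetric] sum.distrib)
  also have "\<dots> = subst_pow2 n P + subst_pow2 n Q"
    by (simp add: subst_pow2_superset[symmetric])
  finally show ?thesis .
qed

lemma subst_pow2_diff: "subst_pow2 n (P - Q) = subst_pow2 n P - subst_pow2 n Q"
  by (metis add_diff_cancel_right' diff_add_cancel subst_pow2_add)

lemma subst_pow2_sum: "subst_pow2 n (sum f A) = (\<Sum>a\<in>A. subst_pow2 n (f a))"
  by (induction A rule: infinite_finite_induct) (auto simp: subst_pow2_add)

lemma subst_pow2_one [simp]: "subst_pow2 n 1 = 1"
  by (metis single_one subst_pow2_single pow2_exponent_zero monom_0 one_pCons)

lemma poly_mapping_sum_single_lookup:
  "(\<Sum>a\<in>Poly_Mapping.keys X. Poly_Mapping.single a (Poly_Mapping.lookup X a)) = X"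
  by (rule poly_mapping_eqI) (auto simp: lookup_sum lookup_single when_def in_keys_iff)

lemma subst_pow2_mult:
  assumes "in_Qx_after n P" "in_Qx_after n Q"
  shows "subst_pow2 n (P * Q) = subst_pow2 n P * subst_pow2 n Q"
proof -
  let ?KP = "Poly_Mapping.keys P" and ?KQ = "Poly_Mapping.keys Q"
  let ?p = "Poly_Mapping.lookup P" and ?q = "Poly_Mapping.lookup Q"
  have "P * Q = (\<Sum>a\<in>?KP. Poly_Mapping.single a (?p a)) * (\<Sum>b\<in>?KQ. Poly_Mapping.single b (?q b))"
    by (simp add: poly_mapping_sum_single_lookup)
  also have "\<dots> = (\<Sum>a\<in>?KP. \<Sum>b\<in>?KQ. Poly_Mapping.single (a + b) (?p a * ?q b))"
    by (simp add: sum_product mult_single)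
  finally have "subst_pow2 n (P * Q) =
      (\<Sum>a\<in>?KP. \<Sum>b\<in>?KQ. monom (?p a * ?q b) (pow2_exponent n (a + b)))"
    by (simp add: subst_pow2_sum)
  also have "\<dots> = (\<Sum>a\<in>?KP. \<Sum>b\<in>?KQ. monom (?p a) (pow2_exponent n a) * monom (?q b) (pow2_exponent n b))"
    using assms by (intro sum.cong refl) (simp add: mult_monom pow2_exponent_add in_Qx_after_def)
  also have "\<dots> = subst_pow2 n P * subst_pow2 n Q"
    by (simp add: subst_pow2_def pow2_exponent_def sum_product)
  finally show ?thesis .
qed

lemma coeff_subst_pow2:
  assumes "in_Qx_after n P" "rat_of_dyadic m * 2 ^ n \<in> \<int>"
  shows "coeff (subst_pow2 n P) (pow2_exponent n m) = Poly_Mapping.lookup P m"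
proof -
  have "coeff (subst_pow2 n P) (pow2_exponent n m) =
      (\<Sum>m'\<in>Poly_Mapping.keys P. if m' = m then Poly_Mapping.lookup P m' else 0)"
    unfolding subst_pow2_superset[OF finite_keys order_refl] coeff_sum coeff_monom
    using assms by (intro sum.cong refl) (auto simp: in_Qx_after_def dest: pow2_exponent_inj)
  also have "\<dots> = Poly_Mapping.lookup P m"
    by (simp add: in_keys_iff)
  finally show ?thesis .
qed

lemma subst_pow2_eq_0_iff:
  assumes "in_Qx_after n P"
  shows "subst_pow2 n P = 0 \<longleftrightarrow> P = 0"
proof
  assume "subst_pow2 n P = 0"
  then have "Poly_Mapping.lookup P m = 0" if "m \<in> Poly_Mapping.keys P" for m
    using coeff_subst_pow2[OF assms, of m] assms that by (simp add: in_Qx_after_def)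
  then show "P = 0"
    by (metis in_keys_iff lookup_zero poly_mapping_eqI)
qed simp

lemma inj_on_subst_pow2: "inj_on (subst_pow2 n) {P. in_Qx_after n P}"
proof (rule inj_onI)
  fix P Q
  assume "P \<in> {P. in_Qx_after n P}" "Q \<in> {P. in_Qx_after n P}" "subst_pow2 n P = subst_pow2 n Q"
  then have "in_Qx_after n (P - Q)" "subst_pow2 n (P - Q) = 0"
    by (simp_all add: in_Qx_after_diff subst_pow2_diff)
  then show "P = Q"
    by (simp add: subst_pow2_eq_0_iff)
qed

lemma subst_pow2_preimage:
  obtains P where "in_Qx_after n P" "subst_pow2 n P = p"
proof
  define P where "P = (\<Sum>k\<le>degree p. Poly_Mapping.single (dyadic_of n k) (coeff p k))"
  show "subst_pow2 n P = p"
    unfolding P_def subst_pow2_sum subst_pow2_single pow2_exponent_dyadic_of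
    by (rule poly_as_sum_of_monoms)
  have "Poly_Mapping.keys P \<subseteq> dyadic_of n ` {..degree p}"
    unfolding P_def by (rule order_trans[OF keys_sum]) auto
  then show "in_Qx_after n P"
    unfolding in_Qx_after_def by (auto simp: rat_of_dyadic_of)
qed

lemma subst_pow2_eq_const_iff:
  assumes "in_Qx_after n P"
  shows "subst_pow2 n P = [:c:] \<longleftrightarrow> P = Poly_Mapping.single 0 c"
proof
  assume "subst_pow2 n P = [:c:]"
  then have "subst_pow2 n P = subst_pow2 n (Poly_Mapping.single 0 c)"
    by (simp add: monom_0)
  then show "P = Poly_Mapping.single 0 c"
    using assms in_Qx_after_single_0 by (blast dest: inj_onD[OF inj_on_subst_pow2])
qed (simp add: monom_0)

lemma QM_dvd_one_iff: "(P :: QM) dvd 1 \<longleftrightarrow> (\<exists>c. c \<noteq> 0 \<and> P = Poly_Mapping.single 0 c)"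
proof
  assume "P dvd 1"
  then obtain Q where PQ: "P * Q = 1"
    by (metis dvdE)
  obtain n where n: "in_Qx_after n P" "in_Qx_after n Q"
    using in_Qx_after_common .
  have "subst_pow2 n P * subst_pow2 n Q = 1"
    using PQ by (simp flip: subst_pow2_mult[OF n])
  then obtain c where "c \<noteq> 0" "subst_pow2 n P = [:c:]"
    by (metis dvd_triv_left is_unit_poly_iff dvd_field_iff zero_neq_one)
  then show "\<exists>c. c \<noteq> 0 \<and> P = Poly_Mapping.single 0 c"
    using n(1) by (auto simp: subst_pow2_eq_const_iff)
next
  assume "\<exists>c. c \<noteq> 0 \<and> P = Poly_Mapping.single 0 c"
  then obtain c where "c \<noteq> 0" "P = Poly_Mapping.single 0 c"
    by blast
  then have "P * Poly_Mapping.single 0 (inverse c) = 1"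
    by (simp add: mult_single)
  then show "P dvd 1"
    by (metis dvd_triv_left)
qed

lemma subst_pow2_dvd_one_iff:
  assumes "in_Qx_after n P"
  shows "subst_pow2 n P dvd 1 \<longleftrightarrow> P dvd 1"
  using assms by (auto simp: is_unit_poly_iff dvd_field_iff QM_dvd_one_iff subst_pow2_eq_const_iff)

lemma irreducible_subst_pow2:
  assumes "irreducible P" "in_Qx_after n P"
  shows "irreducible (subst_pow2 n P)"
proof (rule irreducibleI)
  show "subst_pow2 n P \<noteq> 0" "\<not> subst_pow2 n P dvd 1"
    using assms by (auto simp: subst_pow2_eq_0_iff subst_pow2_dvd_one_iff irreducible_def)
next
  fix a b
  assume ab: "subst_pow2 n P = a * b"
  obtain A B where A: "in_Qx_after n A" "subst_pow2 n A = a"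
    and B: "in_Qx_after n B" "subst_pow2 n B = b"
    using subst_pow2_preimage by metis
  have "subst_pow2 n P = subst_pow2 n (A * B)"
    using ab A B by (simp add: subst_pow2_mult)
  then have "P = A * B"
    using assms(2) in_Qx_after_mult[OF A(1) B(1)] by (blast dest: inj_onD[OF inj_on_subst_pow2])
  then have "A dvd 1 \<or> B dvd 1"
    by (rule irreducibleD[OF assms(1)])
  then show "a dvd 1 \<or> b dvd 1"
    using A B by (auto simp: subst_pow2_dvd_one_iff)
qed

lemma irreducible_if_subst_pow2_irreducible:
  assumes irr: "\<And>n. in_Qx_after n P \<Longrightarrow> irreducible (subst_pow2 n P)"
  shows "irreducible P"
proof (rule irreducibleI)
  obtain n where n: "in_Qx_after n P"
    using ex_in_Qx_after ..
  show "P \<noteq> 0" "\<not> P dvd 1"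
    using irr[OF n] n by (auto simp: subst_pow2_eq_0_iff subst_pow2_dvd_one_iff irreducible_def)
next
  fix A B
  assume AB: "P = A * B"
  obtain n where n: "in_Qx_after n A" "in_Qx_after n B"
    using in_Qx_after_common .
  have "irreducible (subst_pow2 n A * subst_pow2 n B)"
    using irr[of n] AB in_Qx_after_mult[OF n] by (simp add: subst_pow2_mult[OF n])
  then have "subst_pow2 n A dvd 1 \<or> subst_pow2 n B dvd 1"
    by (rule irreducibleD) simp
  then show "A dvd 1 \<or> B dvd 1"
    using n by (simp add: subst_pow2_dvd_one_iff)
qed

theorem lemma4p1:
  fixes P :: QM
  assumes "P \<noteq> 0"
  shows "irreducible P \<longleftrightarrow>
           (\<forall>n::nat. in_Qx_after n P \<longrightarrow> irreducible (subst_pow2 n P))"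
  using irreducible_subst_pow2 irreducible_if_subst_pow2_irreducible by blast

end
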